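(* Let $v(0)\in\mathcal N^*$, $v(0)\neq0$, and $T>0$. For $0<\lambda\le1$ let $w^*$ be the solution on $[0,T]$ of $$\dot w^*(t)=\frac{\lambda}{w^*(t)E_0(t+w^*(t))}-1,\qquad w^*(0)=\frac1{m_1(0)}.$$ Then there exist constants $d_1,d_2$ depending only on $v(0)$ and $T$ such that for all $0<\lambda\le1$ and all $t$ with $\frac1{m_1(0)}+d_1\lambda\log(1/\lambda)\le t\le T$, $$\Big|w^*(t)-\frac{\lambda}{E_0(t)}\Big|\le d_2\lambda^2.$$
   Context: $\mathcal N^*$: finitely supported sequences $v=(v_k)_{k\ge1}$ of nonnegative reals; $m_1(0)=\sum_kkv_k(0)$. Critical core: with $U_0(x)=\sum_kv_k(0)(e^{-kx}-1)$, $E_0:(0,\infty)\to(0,\infty)$ is defined by $E_0(-1/U_0'(x))=\frac{(-U_0'(x))^3}{U_0''(x)}$ for $x\in\mathbb R$ ($x\mapsto-1/U_0'(x)$ is a bijection $\mathbb R\to(0,\infty)$). *)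

theory Defs
  imports "HOL-Analysis.Analysis"
begin

text \<open>Elements of N*: finitely supported sequences (v_k)_{k>=1} of nonnegative reals,
  represented as functions nat => real with v 0 = 0 (index 0 unused).\<close>
definition Nstar :: "(nat \<Rightarrow> real) \<Rightarrow> bool" where
  "Nstar v \<longleftrightarrow> (\<forall>k. 0 \<le> v k) \<and> finite {k. v k \<noteq> 0} \<and> v 0 = 0"

definition m1 :: "(nat \<Rightarrow> real) \<Rightarrow> real" where
  "m1 v = (\<Sum>k\<in>{k. v k \<noteq> 0}. real k * v k)"

definition U0 :: "(nat \<Rightarrow> real) \<Rightarrow> real \<Rightarrow> real" where
  "U0 v x = (\<Sum>k\<in>{k. v k \<noteq> 0}. v k * (exp (- real k * x) - 1))"

definition E0 :: "(nat \<Rightarrow> real) \<Rightarrow> real \<Rightarrow> real" where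
  "E0 v s = (let x = (THE x. - 1 / deriv (U0 v) x = s)
             in (- deriv (U0 v) x) ^ 3 / deriv (deriv (U0 v)) x)"

end

theory Submission
  imports Defs
begin

text \<open>Put \<open>A = 1/E0\<close>, so that the equation reads \<open>w' = \<lambda> A(t + w)/w - 1\<close>. At the point \<open>x\<close>
  where \<open>-1/U0'(x) = s\<close> one has \<open>A(s) = s\<^sup>2 U0''(x)/(-U0'(x))\<close>, so \<open>A\<close> is bounded and
  Lipschitz on \<open>[1/m1, T + sup w]\<close>. Starting from \<open>w(0) = 1/m1\<close>, the Lyapunov function
  \<open>w + c ln (w - c) + t\<close> with \<open>c = \<lambda> max A\<close> shows that \<open>w\<close> drops below \<open>2c\<close> by time
  \<open>1/m1 + c ln(1/\<lambda>)\<close>. From then on a barrier argument keeps \<open>w\<close> within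
  \<open>2c exp(-(t-\<tau>)/(2\<lambda>M)) + O(\<lambda>\<^sup>2)\<close> of the quasi-equilibrium \<open>q(t) = \<lambda> A(t + w(t))\<close> (\<open>M\<close> a constant); after a
  further time \<open>2\<lambda>M ln(1/\<lambda>)\<close> the exponential term is \<open>O(\<lambda>\<^sup>2)\<close>, and
  \<open>q(t) = \<lambda> A(t) + O(\<lambda> w(t)) = \<lambda>/E0(t) + O(\<lambda>\<^sup>2)\<close>.\<close>

section \<open>Barrier arguments\<close>

lemma nonpos_on_interval_if_nonpos_after_zeros:
  fixes f :: "real \<Rightarrow> real"
  assumes ab: "a \<le> b" and cont: "continuous_on {a..b} f" and fa: "f a \<le> 0"
    and step: "\<And>t. a \<le> t \<Longrightarrow> t < b \<Longrightarrow> f t = 0 \<Longrightarrow>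
        \<exists>d>0. \<forall>h>0. h < d \<longrightarrow> t + h \<le> b \<longrightarrow> f (t + h) \<le> 0"
  shows "\<forall>t\<in>{a..b}. f t \<le> 0"
proof (rule ccontr)
  assume "\<not> ?thesis"
  then obtain t2 where t2: "a \<le> t2" "t2 \<le> b" "f t2 > 0" by auto
  define Z where "Z = {t \<in> {a..t2}. f t = 0}"
  have cont2: "continuous_on {a..t2} f" using t2 by (intro continuous_on_subset[OF cont]) auto
  have "closed Z" unfolding Z_def by (rule continuous_closed_preimage_constant[OF cont2]) auto
  moreover have "bounded Z" unfolding Z_def by (rule bounded_subset[of "{a..t2}"]) auto
  ultimately have "compact Z" using compact_eq_bounded_closed by blast
  moreover obtain z where "a \<le> z" "z \<le> t2" "f z = 0"
    using IVT'[of f a 0 t2] fa t2 cont2 by auto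
  then have "Z \<noteq> {}" unfolding Z_def by auto
  ultimately obtain t0 where t0: "t0 \<in> Z" "\<forall>y\<in>Z. y \<le> t0"
    using compact_attains_sup by blast
  have t0': "a \<le> t0" "t0 \<le> t2" "f t0 = 0" using t0 unfolding Z_def by auto
  with t2 have t02: "t0 < t2" by (cases "t0 = t2") auto
  have pos: "f y > 0" if y: "t0 < y" "y \<le> t2" for y
  proof (rule ccontr)
    assume "\<not> f y > 0"
    moreover have "continuous_on {y..t2} f" using y t0' by (intro continuous_on_subset[OF cont2]) auto
    ultimately obtain z where "y \<le> z" "z \<le> t2" "f z = 0" using IVT'[of f y 0 t2] t2 y by auto
    then have "z \<in> Z" using y t0' unfolding Z_def by auto
    then show False using t0(2) \<open>y \<le> z\<close> y by force
  qed
  obtain d where d: "d > 0" "\<forall>h>0. h < d \<longrightarrow> t0 + h \<le> b \<longrightarrow> f (t0 + h) \<le> 0"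
    using step[of t0] t0' t02 t2 by auto
  define h where "h = min (d/2) (t2 - t0)"
  have "h > 0" "h < d" "t0 + h \<le> b" "t0 + h \<le> t2" using d t02 t2 by (auto simp: h_def)
  then show False using d pos[of "t0 + h"] by auto
qed

lemma nonpos_on_interval_by_comparison:
  fixes f :: "real \<Rightarrow> real"
  assumes "a \<le> b" and "continuous_on {a..b} f" and "f a \<le> 0"
    and touch: "\<And>u. a \<le> u \<Longrightarrow> u < b \<Longrightarrow> f u = 0 \<Longrightarrow>
        \<exists>g g'. g u = 0 \<and> (g has_real_derivative g') (at u within {a..b}) \<and> g' < 0
          \<and> (\<forall>y\<in>{u..b}. f y \<le> g y)"
  shows "\<forall>t\<in>{a..b}. f t \<le> 0"
proof (rule nonpos_on_interval_if_nonpos_after_zeros[OF assms(1-3)])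
  fix u assume u: "a \<le> u" "u < b" "f u = 0"
  then obtain g g' where g: "g u = 0" "(g has_real_derivative g') (at u within {a..b})"
    "g' < 0" "\<forall>y\<in>{u..b}. f y \<le> g y"
    using touch by blast
  obtain d where d: "d > 0" "\<forall>h>0. u + h \<in> {a..b} \<longrightarrow> h < d \<longrightarrow> g (u + h) < g u"
    using has_real_derivative_neg_dec_right[OF g(2,3)] by blast
  show "\<exists>d>0. \<forall>h>0. h < d \<longrightarrow> u + h \<le> b \<longrightarrow> f (u + h) \<le> 0"
  proof (intro exI[of _ d] conjI allI impI)
    fix h :: real assume h: "0 < h" "h < d" "u + h \<le> b"
    then have "g (u + h) < 0" using d(2) g(1) u by auto
    moreover have "f (u + h) \<le> g (u + h)" using g(4) h by auto
    ultimately show "f (u + h) \<le> 0" by simp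
  qed (rule d(1))
qed

lemma DERIV_within_nonpos_imp_decreasing:
  fixes f f' :: "real \<Rightarrow> real"
  assumes der: "\<And>x. x \<in> {a..b} \<Longrightarrow> (f has_real_derivative f' x) (at x within {a..b})"
    and nonpos: "\<And>x. a < x \<Longrightarrow> x < b \<Longrightarrow> f' x \<le> 0"
    and xy: "a \<le> x" "x \<le> y" "y \<le> b"
  shows "f y \<le> f x"
proof (rule DERIV_nonpos_imp_decreasing_open[OF xy(2)])
  fix z assume z: "x < z" "z < y"
  then have "at z within {a..b} = at z" using xy by (intro at_within_interior) auto
  then show "\<exists>y. (f has_real_derivative y) (at z) \<and> y \<le> 0"
    using der[of z] nonpos[of z] z xy by auto
next
  show "continuous_on {x..y} f"
    using DERIV_continuous_on[OF der] xy by (auto intro: continuous_on_subset)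
qed

section \<open>Equations of the form \<open>w' = q/w - 1\<close>\<close>

text \<open>\<open>w + c ln (w - c) + t\<close> is a Lyapunov function as long as \<open>w > c\<close>:
  its derivative is \<open>w' w / (w - c) + 1 \<le> 0\<close>.\<close>
lemma time_above_twice_level_bound:
  fixes w w' :: "real \<Rightarrow> real"
  assumes c: "0 < c" and ab: "a \<le> b"
    and der: "\<And>y. y \<in> {a..b} \<Longrightarrow> (w has_real_derivative w' y) (at y within {a..b})"
    and slope: "\<And>y. y \<in> {a..b} \<Longrightarrow> w' y \<le> c / w y - 1"
    and above: "\<And>y. y \<in> {a..b} \<Longrightarrow> 2 * c < w y"
  shows "b - a < w a + c * ln (w a / c)"
proof -
  define V where "V y = w y + c * ln (w y - c) + y" for y
  have "V b \<le> V a"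
  proof (rule DERIV_within_nonpos_imp_decreasing[where a = a and b = b and f = V
        and f' = "\<lambda>y. w' y * (w y / (w y - c)) + 1"])
    fix y assume y: "y \<in> {a..b}"
    have pos: "0 < w y - c" using above[OF y] c by simp
    then have "(V has_real_derivative w' y + c * (w' y / (w y - c)) + 1) (at y within {a..b})"
      unfolding V_def by (auto intro!: derivative_eq_intros der[OF y])
    moreover have "w' y + c * (w' y / (w y - c)) = w' y * (w y / (w y - c))"
      using pos by (simp add: field_simps)
    ultimately show "(V has_real_derivative w' y * (w y / (w y - c)) + 1) (at y within {a..b})"
      by metis
  next
    fix y assume "a < y" "y < b"
    then have y: "y \<in> {a..b}" by simp
    have "w' y * (w y / (w y - c)) \<le> (c / w y - 1) * (w y / (w y - c))"
      using slope[OF y] above[OF y] c by (intro mult_right_mono) auto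
    also have "\<dots> = -1" using above[OF y] c by (simp add: field_simps)
    finally show "w' y * (w y / (w y - c)) + 1 \<le> 0" by simp
  qed (use ab in auto)
  moreover have "2 * c + c * ln c < w b + c * ln (w b - c)"
    using above[of b] ab c by (simp add: mult_strict_left_mono add_strict_mono)
  moreover have "c * ln (w a - c) \<le> c * ln (w a)"
    using above[of a] ab c by (intro mult_left_mono) auto
  moreover have "c * ln (w a / c) = c * ln (w a) - c * ln c"
    using above[of a] ab c by (simp add: ln_div right_diff_distrib)
  ultimately show ?thesis using c unfolding V_def by linarith
qed

locale quasi_equilibrium_tracking =
  fixes w q :: "real \<Rightarrow> real" and a b c L \<mu> :: real
  assumes w_pos: "\<And>u. u \<in> {a..b} \<Longrightarrow> 0 < w u"
    and w_deriv: "\<And>u. u \<in> {a..b} \<Longrightarrow> (w has_real_derivative q u / w u - 1) (at u within {a..b})"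
    and q_cont: "continuous_on {a..b} q"
    and q_bounds: "\<And>u. u \<in> {a..b} \<Longrightarrow> 0 \<le> q u \<and> q u \<le> c"
    and q_lipschitz: "\<And>u y. a \<le> u \<Longrightarrow> u \<le> y \<Longrightarrow> y \<le> b \<Longrightarrow>
        \<bar>q u - q y\<bar> \<le> L * ((y + w y) - (u + w u))"
    and pos: "0 < c" "0 < L" "0 < \<mu>"
    and small: "3 * c + 2 * L * \<mu> \<le> \<mu>"
    and start: "w a \<le> 2 * c"
begin

lemma w_continuous: "continuous_on {a..b} w"
  using w_deriv by (rule DERIV_continuous_on)

definition "decay y = 2 * c * exp (- (y - a) / (2 * \<mu>))"

lemma decay_has_derivative: "(decay has_real_derivative - decay u / (2 * \<mu>)) (at u within S)"
  unfolding decay_def using pos by (auto intro!: derivative_eq_intros simp: field_simps)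

lemma continuous_on_decay: "continuous_on S decay"
  unfolding decay_def using pos by (intro continuous_intros) auto

lemma L_\<mu>_pos: "0 < 2 * L * \<mu>"
  using pos by simp

lemma decay_pos: "0 < decay u"
  using pos by (simp add: decay_def)

lemma decay_le: "a \<le> u \<Longrightarrow> decay u \<le> 2 * c"
  using pos by (simp add: decay_def divide_nonpos_pos)

lemma upper_touch_slope:
  assumes u: "u \<in> {a..b}" and wu: "w u = q u + decay u + 2 * L * \<mu>"
  shows "(q u / w u - 1) + L * (q u / w u) + decay u / (2 * \<mu>) < 0"
proof -
  have w0: "0 < w u" by (rule w_pos[OF u])
  have "w u \<le> \<mu>" using wu decay_le[of u] q_bounds[OF u] small u by simp
  have "decay u / \<mu> + 2 * L = (decay u + 2 * L * \<mu>) / \<mu>"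
    using pos by (simp add: field_simps)
  also have "\<dots> \<le> (decay u + 2 * L * \<mu>) / w u"
    using \<open>w u \<le> \<mu>\<close> w0 decay_pos[of u] L_\<mu>_pos by (intro divide_left_mono) auto
  also have "\<dots> = - (q u / w u - 1)" using w0 wu by (simp add: field_simps)
  finally have "q u / w u - 1 \<le> - (decay u / \<mu>) - 2 * L" by simp
  moreover have "q u / w u \<le> 1" using w0 wu decay_pos[of u] L_\<mu>_pos by simp
  then have "L * (q u / w u) \<le> L" using pos mult_left_mono[of "q u / w u" 1 L] by simp
  moreover have "0 < decay u / \<mu>" using decay_pos pos by simp
  moreover have "decay u / (2 * \<mu>) = (decay u / \<mu>) / 2" by simp
  ultimately show ?thesis using pos by linarith
qed

lemma lower_touch_slope:
  assumes u: "u \<in> {a..b}" and wu: "w u = q u - decay u - 2 * L * \<mu>"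
  shows "L * (q u / w u) + decay u / (2 * \<mu>) - (q u / w u - 1) < 0"
proof -
  have w0: "0 < w u" by (rule w_pos[OF u])
  have "c \<le> \<mu>" using small L_\<mu>_pos pos by linarith
  then have "w u \<le> \<mu>" using wu q_bounds[OF u] decay_pos[of u] L_\<mu>_pos by linarith
  have "L * q u \<le> L * \<mu>" using q_bounds[OF u] \<open>c \<le> \<mu>\<close> pos by (intro mult_left_mono) auto
  then have N: "L * q u - decay u - 2 * L * \<mu> < - decay u" using pos by simp
  have "L * (q u / w u) - (q u / w u - 1) = (L * q u - decay u - 2 * L * \<mu>) / w u"
    using w0 wu by (simp add: field_simps)
  also have "\<dots> \<le> (L * q u - decay u - 2 * L * \<mu>) / \<mu>"
    using N decay_pos[of u] \<open>w u \<le> \<mu>\<close> w0 by (intro divide_left_mono_neg) auto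
  also have "\<dots> < - decay u / \<mu>" using N pos by (intro divide_strict_right_mono) auto
  finally have "L * (q u / w u) - (q u / w u - 1) < - decay u / \<mu>" .
  moreover have "0 < decay u / \<mu>" using decay_pos pos by simp
  ultimately show ?thesis by (simp add: field_simps)
qed

text \<open>At a point where \<open>w\<close> touches the barrier, the Lipschitz bound on \<open>q\<close> in terms of
  \<open>t + w t\<close> lets us freeze \<open>q\<close> at its value there, at the cost of a term \<open>L (t + w t)\<close>
  whose derivative is controlled by \<open>w'\<close>.\<close>
lemma tracking_upper:
  assumes "t \<in> {a..b}"
  shows "w t \<le> q t + decay t + 2 * L * \<mu>"
proof -
  define f where "f y = w y - q y - decay y - 2 * L * \<mu>" for y
  have "\<forall>t\<in>{a..b}. f t \<le> 0"
  proof (rule nonpos_on_interval_by_comparison)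
    show "a \<le> b" using assms by simp
    show "continuous_on {a..b} f"
      unfolding f_def by (intro continuous_intros w_continuous q_cont continuous_on_decay)
    show "f a \<le> 0"
      using start q_bounds[of a] \<open>a \<le> b\<close> L_\<mu>_pos by (simp add: f_def decay_def)
  next
    fix u assume u: "a \<le> u" "u < b" "f u = 0"
    then have uab: "u \<in> {a..b}" by simp
    define g where "g y = w y - q u + L * ((y + w y) - (u + w u)) - decay y - 2 * L * \<mu>" for y
    have "(g has_real_derivative (q u / w u - 1) + L * (q u / w u) + decay u / (2 * \<mu>))
        (at u within {a..b})"
      unfolding g_def
      by (auto intro!: derivative_eq_intros w_deriv[OF uab] decay_has_derivative)
    moreover have "f y \<le> g y" if "y \<in> {u..b}" for y
      using q_lipschitz[of u y] that u by (simp add: f_def g_def)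
    moreover have "w u = q u + decay u + 2 * L * \<mu>" using u by (simp add: f_def)
    ultimately show "\<exists>g g'. g u = 0 \<and> (g has_real_derivative g') (at u within {a..b}) \<and> g' < 0
          \<and> (\<forall>y\<in>{u..b}. f y \<le> g y)"
      using upper_touch_slope[OF uab] by (intro exI[of _ g]) (auto simp: g_def)
  qed
  then show ?thesis using assms unfolding f_def by fastforce
qed

lemma tracking_lower:
  assumes "t \<in> {a..b}"
  shows "q t - decay t - 2 * L * \<mu> \<le> w t"
proof -
  define f where "f y = q y - decay y - 2 * L * \<mu> - w y" for y
  have "\<forall>t\<in>{a..b}. f t \<le> 0"
  proof (rule nonpos_on_interval_by_comparison)
    show "a \<le> b" using assms by simp
    show "continuous_on {a..b} f"
      unfolding f_def by (intro continuous_intros w_continuous q_cont continuous_on_decay)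
    show "f a \<le> 0"
      using q_bounds[of a] w_pos[of a] \<open>a \<le> b\<close> L_\<mu>_pos by (simp add: f_def decay_def)
  next
    fix u assume u: "a \<le> u" "u < b" "f u = 0"
    then have uab: "u \<in> {a..b}" by simp
    define g where "g y = q u + L * ((y + w y) - (u + w u)) - decay y - 2 * L * \<mu> - w y" for y
    have "(g has_real_derivative L * (q u / w u) + decay u / (2 * \<mu>) - (q u / w u - 1))
        (at u within {a..b})"
      unfolding g_def
      by (auto intro!: derivative_eq_intros w_deriv[OF uab] decay_has_derivative)
    moreover have "f y \<le> g y" if "y \<in> {u..b}" for y
      using q_lipschitz[of u y] that u by (simp add: f_def g_def)
    moreover have "w u = q u - decay u - 2 * L * \<mu>" using u by (simp add: f_def)
    ultimately show "\<exists>g g'. g u = 0 \<and> (g has_real_derivative g') (at u within {a..b}) \<and> g' < 0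
          \<and> (\<forall>y\<in>{u..b}. f y \<le> g y)"
      using lower_touch_slope[OF uab] by (intro exI[of _ g]) (auto simp: g_def)
  qed
  then show ?thesis using assms unfolding f_def by fastforce
qed

lemma tracking_bound:
  assumes "t \<in> {a..b}"
  shows "\<bar>w t - q t\<bar> \<le> decay t + 2 * L * \<mu>"
  using tracking_upper[OF assms] tracking_lower[OF assms] by linarith

lemma tracking_le:
  assumes "t \<in> {a..b}" shows "w t \<le> \<mu>"
  using tracking_upper[OF assms] decay_le[of t] q_bounds[OF assms] small assms by auto

end

section \<open>The critical core\<close>

locale critical_core =
  fixes v :: "nat \<Rightarrow> real"
  assumes Nstar: "Nstar v" and nonzero: "v \<noteq> (\<lambda>k. 0)"
begin

definition "supp = {k. v k \<noteq> 0}"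

text \<open>\<open>P = -U0'\<close>, \<open>Q = U0''\<close> and \<open>R = -U0'''\<close>.\<close>
definition "P x = (\<Sum>k\<in>supp. real k * v k * exp (- real k * x))"
definition "Q x = (\<Sum>k\<in>supp. real k ^ 2 * v k * exp (- real k * x))"
definition "R x = (\<Sum>k\<in>supp. real k ^ 3 * v k * exp (- real k * x))"
definition "K = real (Max supp)"

abbreviation "m \<equiv> m1 v"

lemma finite_supp: "finite supp"
  using Nstar by (simp add: Nstar_def supp_def)

lemma supp_nonempty: "supp \<noteq> {}"
  using nonzero by (auto simp: supp_def)

lemma supp_D:
  assumes "k \<in> supp" shows "1 \<le> real k" and "0 < real k" and "0 < v k"
proof -
  have vk: "v k \<noteq> 0" using assms by (simp add: supp_def)
  moreover have "0 \<le> v k" "v 0 = 0" using Nstar by (simp_all add: Nstar_def)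
  ultimately have "k \<noteq> 0" "0 < v k" by (metis, linarith)
  then show "1 \<le> real k" "0 < real k" "0 < v k" by simp_all
qed

lemma le_K: "k \<in> supp \<Longrightarrow> real k \<le> K"
  unfolding K_def using finite_supp by simp

lemma K_ge_1: "1 \<le> K"
proof -
  obtain k where "k \<in> supp" using supp_nonempty by blast
  then show ?thesis using supp_D(1) le_K by (meson order_trans)
qed

lemma P_pos: "0 < P x"
  unfolding P_def using finite_supp supp_nonempty supp_D
  by (intro sum_pos) auto

lemma P_le_Q: "P x \<le> Q x"
  unfolding P_def Q_def
proof (intro sum_mono)
  fix k assume k: "k \<in> supp"
  have "real k \<le> real k ^ 2" using supp_D[OF k] by (simp add: power2_eq_square)
  then show "real k * v k * exp (- real k * x) \<le> real k ^ 2 * v k * exp (- real k * x)"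
    using supp_D[OF k] by (intro mult_right_mono) auto
qed

lemma Q_le_K_P: "Q x \<le> K * P x"
  unfolding P_def Q_def sum_distrib_left
proof (intro sum_mono)
  fix k assume k: "k \<in> supp"
  have "real k ^ 2 \<le> K * real k" using le_K[OF k] supp_D[OF k] by (simp add: power2_eq_square)
  then show "real k ^ 2 * v k * exp (- real k * x) \<le> K * (real k * v k * exp (- real k * x))"
    using supp_D[OF k] by (simp add: mult.assoc[symmetric] mult_right_mono)
qed

lemma R_le_K_Q: "R x \<le> K * Q x"
  unfolding R_def Q_def sum_distrib_left
proof (intro sum_mono)
  fix k assume k: "k \<in> supp"
  have "real k ^ 3 \<le> K * real k ^ 2"
    using le_K[OF k] supp_D[OF k] by (simp add: power2_eq_square power3_eq_cube)
  then show "real k ^ 3 * v k * exp (- real k * x) \<le> K * (real k ^ 2 * v k * exp (- real k * x))"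
    using supp_D[OF k] by (simp add: mult.assoc[symmetric] mult_right_mono)
qed

lemma Q_pos: "0 < Q x"
  using P_le_Q P_pos less_le_trans by blast

lemma R_nonneg: "0 \<le> R x"
  unfolding R_def using supp_D by (intro sum_nonneg) (auto intro!: mult_nonneg_nonneg less_imp_le)

lemma P_0: "P 0 = m"
  unfolding P_def m1_def supp_def by simp

lemma m_pos: "0 < m"
  using P_0 P_pos by metis

lemma pos_if_inverse_m_le: "1 / m \<le> s \<Longrightarrow> 0 < s"
  using m_pos by (meson less_le_trans zero_less_divide_1_iff)

lemma U0_has_derivative: "(U0 v has_real_derivative - P x) (at x)"
proof -
  have "U0 v = (\<lambda>x. \<Sum>k\<in>supp. v k * (exp (- real k * x) - 1))"
    by (auto simp: U0_def supp_def)
  moreover have "((\<lambda>x. \<Sum>k\<in>supp. v k * (exp (- real k * x) - 1)) has_real_derivative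
      (\<Sum>k\<in>supp. v k * (exp (- real k * x) * (- real k)))) (at x)"
    by (auto intro!: derivative_eq_intros sum.cong simp: algebra_simps)
  moreover have "(\<Sum>k\<in>supp. v k * (exp (- real k * x) * (- real k))) = - P x"
    unfolding P_def by (subst sum_negf[symmetric], rule sum.cong) (auto simp: algebra_simps)
  ultimately show ?thesis by simp
qed

lemma P_has_derivative: "(P has_real_derivative - Q x) (at x)"
proof -
  have "((\<lambda>x. \<Sum>k\<in>supp. real k * v k * exp (- real k * x)) has_real_derivative
      (\<Sum>k\<in>supp. real k * v k * (exp (- real k * x) * (- real k)))) (at x)"
    by (auto intro!: derivative_eq_intros sum.cong simp: algebra_simps)
  moreover have "(\<Sum>k\<in>supp. real k * v k * (exp (- real k * x) * (- real k))) = - Q x"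
    unfolding Q_def
    by (subst sum_negf[symmetric], rule sum.cong) (auto simp: algebra_simps power2_eq_square)
  ultimately show ?thesis unfolding P_def[abs_def] by simp
qed

lemma Q_has_derivative: "(Q has_real_derivative - R x) (at x)"
proof -
  have "((\<lambda>x. \<Sum>k\<in>supp. real k ^ 2 * v k * exp (- real k * x)) has_real_derivative
      (\<Sum>k\<in>supp. real k ^ 2 * v k * (exp (- real k * x) * (- real k)))) (at x)"
    by (auto intro!: derivative_eq_intros sum.cong simp: algebra_simps)
  moreover have "(\<Sum>k\<in>supp. real k ^ 2 * v k * (exp (- real k * x) * (- real k))) = - R x"
    unfolding R_def
    by (subst sum_negf[symmetric], rule sum.cong) (auto simp: algebra_simps power2_eq_square power3_eq_cube)
  ultimately show ?thesis unfolding Q_def[abs_def] by simp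
qed

lemma deriv_U0: "deriv (U0 v) = (\<lambda>x. - P x)"
  using U0_has_derivative DERIV_imp_deriv by blast

lemma deriv2_U0: "deriv (deriv (U0 v)) x = Q x"
proof -
  have "((\<lambda>x. - P x) has_real_derivative Q x) (at x)"
    using P_has_derivative[of x] by (auto intro!: derivative_eq_intros)
  then show ?thesis unfolding deriv_U0 using DERIV_imp_deriv by blast
qed

lemma P_strict_decreasing: "x < y \<Longrightarrow> P y < P x"
  unfolding P_def
proof (intro sum_strict_mono finite_supp supp_nonempty)
  fix k assume xy: "x < y" and k: "k \<in> supp"
  have "exp (- real k * y) < exp (- real k * x)" using supp_D[OF k] xy by simp
  then show "real k * v k * exp (- real k * y) < real k * v k * exp (- real k * x)"
    using supp_D[OF k] by simp
qed

lemma P_inj: "P x = P y \<Longrightarrow> x = y"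
  using P_strict_decreasing by (metis linorder_neqE_linordered_idom order_less_irrefl)

lemma P_le_exp: "0 \<le> x \<Longrightarrow> P x \<le> m * exp (- x)"
proof -
  assume x: "0 \<le> x"
  have "P x \<le> (\<Sum>k\<in>supp. real k * v k * exp (- x))"
    unfolding P_def
  proof (intro sum_mono)
    fix k assume k: "k \<in> supp"
    have "- real k * x \<le> - x" using mult_right_mono[OF supp_D(1)[OF k] x] by simp
    then show "real k * v k * exp (- real k * x) \<le> real k * v k * exp (- x)"
      using supp_D[OF k] by (intro mult_left_mono) auto
  qed
  also have "\<dots> = m * exp (- x)" unfolding m1_def supp_def by (simp add: sum_distrib_right)
  finally show ?thesis .
qed

lemma exp_le_P: "x \<le> 0 \<Longrightarrow> m * exp (- x) \<le> P x"
proof -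
  assume x: "x \<le> 0"
  have "m * exp (- x) = (\<Sum>k\<in>supp. real k * v k * exp (- x))"
    unfolding m1_def supp_def by (simp add: sum_distrib_right)
  also have "\<dots> \<le> P x"
    unfolding P_def
  proof (intro sum_mono)
    fix k assume k: "k \<in> supp"
    have "- x \<le> - real k * x" using mult_right_mono_neg[OF supp_D(1)[OF k] x] by simp
    then show "real k * v k * exp (- x) \<le> real k * v k * exp (- real k * x)"
      using supp_D[OF k] by (intro mult_left_mono) auto
  qed
  finally show ?thesis .
qed

lemma P_attains_inverse:
  assumes s: "0 < s" shows "\<exists>x. P x = 1 / s"
proof -
  define y where "y = \<bar>ln (m * s)\<bar>"
  have ms: "m * exp (- ln (m * s)) = 1 / s"
    using m_pos s by (simp add: exp_minus field_simps)
  have "P y \<le> m * exp (- y)" using P_le_exp[of y] by (simp add: y_def)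
  also have "\<dots> \<le> 1 / s" unfolding ms[symmetric] using m_pos by (simp add: y_def)
  finally have hi: "P y \<le> 1 / s" .
  have "1 / s \<le> m * exp y" unfolding ms[symmetric] using m_pos by (simp add: y_def)
  also have "\<dots> \<le> P (- y)" using exp_le_P[of "- y"] by (simp add: y_def)
  finally have lo: "1 / s \<le> P (- y)" .
  have "continuous_on {- y..y} P"
    using P_has_derivative by (meson DERIV_continuous continuous_at_imp_continuous_on)
  then show ?thesis using IVT2'[of P y "1/s" "-y", OF hi lo] by (auto simp: y_def)
qed

definition "X s = (THE x. - 1 / deriv (U0 v) x = s)"
definition "A s = 1 / E0 v s"

lemma P_X: assumes s: "0 < s" shows "P (X s) = 1 / s"
proof -
  obtain x where x: "P x = 1 / s" using P_attains_inverse[OF s] by blast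
  have eq: "(- 1 / deriv (U0 v) y = s) \<longleftrightarrow> P y = 1 / s" for y
    using P_pos[of y] s unfolding deriv_U0 by (auto simp: field_simps)
  have "X s = x"
    unfolding X_def by (rule the_equality) (use x P_inj eq in auto)
  then show ?thesis using x by simp
qed

lemma E0_eq: "E0 v s = P (X s) ^ 3 / Q (X s)"
  unfolding E0_def X_def[symmetric] Let_def deriv2_U0 by (simp add: deriv_U0)

lemma E0_pos: "0 < E0 v s"
  unfolding E0_eq using P_pos Q_pos by simp

lemma A_pos: "0 < A s"
  unfolding A_def using E0_pos by simp

lemma A_eq: assumes s: "0 < s" shows "A s = s ^ 2 * (Q (X s) / P (X s))"
  unfolding A_def E0_eq P_X[OF s] using s by (simp add: field_simps power3_eq_cube power2_eq_square)

lemma A_le: assumes s: "0 < s" shows "A s \<le> K * s ^ 2"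
proof -
  have "Q (X s) / P (X s) \<le> K" using Q_le_K_P P_pos by (simp add: divide_le_eq)
  then have "s ^ 2 * (Q (X s) / P (X s)) \<le> s ^ 2 * K" by (rule mult_left_mono) simp
  then show ?thesis unfolding A_eq[OF s] by (simp add: mult.commute)
qed

lemma X_nonneg: assumes s: "1 / m \<le> s" shows "0 \<le> X s"
proof (rule ccontr)
  have s0: "0 < s" using pos_if_inverse_m_le[OF s] .
  assume "\<not> 0 \<le> X s"
  then have "P 0 < P (X s)" using P_strict_decreasing by simp
  then have "m < 1 / s" using P_X[OF s0] P_0 by simp
  then show False using s s0 m_pos by (simp add: field_simps)
qed

text \<open>\<open>(1/P)' = Q/P\<^sup>2 \<ge> 1/P \<ge> 1/m\<close> on \<open>[0, \<infinity>)\<close>.\<close>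
lemma inverse_P_increment_ge:
  assumes x1: "0 \<le> x1" and x12: "x1 \<le> x2"
  shows "(x2 - x1) / m \<le> 1 / P x2 - 1 / P x1"
proof -
  let ?g = "\<lambda>x. 1 / P x - x / m"
  have "?g x1 \<le> ?g x2"
  proof (rule DERIV_nonneg_imp_nondecreasing[OF x12])
    fix x assume x: "x1 \<le> x" "x \<le> x2"
    have d: "(?g has_real_derivative (Q x / (P x)^2 - 1 / m)) (at x)"
      using P_pos[of x] m_pos
      by (auto intro!: derivative_eq_intros P_has_derivative simp: power2_eq_square)
    have "P x \<le> P 0"
      using P_strict_decreasing[of 0 x] x x1 by (cases "x = 0") auto
    then have "1 / m \<le> 1 / P x" using P_pos[of x] P_0 by (intro divide_left_mono) auto
    also have "1 / P x \<le> Q x / (P x)^2"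
      using P_le_Q[of x] P_pos[of x] by (simp add: field_simps power2_eq_square)
    finally show "\<exists>y. (?g has_real_derivative y) (at x) \<and> 0 \<le> y" using d by auto
  qed
  then show ?thesis by (simp add: diff_divide_distrib)
qed

lemma X_lipschitz:
  assumes "1 / m \<le> s1" "1 / m \<le> s2" shows "\<bar>X s1 - X s2\<bar> \<le> m * \<bar>s1 - s2\<bar>"
proof -
  have X_diff: "X b - X a \<le> m * \<bar>b - a\<bar>" if "X a \<le> X b" "1 / m \<le> a" "1 / m \<le> b" for a b
  proof -
    have "0 < a" "0 < b" using that pos_if_inverse_m_le by auto
    then have "(X b - X a) / m \<le> b - a"
      using inverse_P_increment_ge[OF X_nonneg[OF that(2)] that(1)] by (simp add: P_X)
    then have "X b - X a \<le> m * (b - a)" using m_pos by (simp add: field_simps)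
    also have "\<dots> \<le> m * \<bar>b - a\<bar>" using m_pos by (intro mult_left_mono) auto
    finally show ?thesis .
  qed
  show ?thesis
    using X_diff[of s1 s2] X_diff[of s2 s1] assms by (cases "X s1 \<le> X s2") (auto simp: abs_minus_commute)
qed

lemma Q_div_P_lipschitz: "\<bar>Q x1 / P x1 - Q x2 / P x2\<bar> \<le> K^2 * \<bar>x1 - x2\<bar>"
proof -
  define r' where "r' x = (Q x * Q x - R x * P x) / (P x)^2" for x
  have "((\<lambda>x. Q x / P x) has_real_derivative r' x) (at x within UNIV)" for x
    using DERIV_divide[OF Q_has_derivative P_has_derivative] P_pos[of x]
    by (simp add: r'_def power2_eq_square algebra_simps)
  moreover have "\<bar>r' x\<bar> \<le> K^2" for x
  proof -
    have p: "0 < P x" by (rule P_pos)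
    have QP: "Q x \<le> K * P x" by (rule Q_le_K_P)
    have "K * Q x \<le> K * (K * P x)" using QP K_ge_1 by (intro mult_left_mono) auto
    then have "R x \<le> K^2 * P x" using R_le_K_Q[of x] by (simp add: power2_eq_square)
    then have "R x * P x \<le> K^2 * (P x)^2" using p by (simp add: power2_eq_square mult_right_mono)
    moreover have "Q x * Q x \<le> K^2 * (P x)^2"
      using mult_mono[OF QP QP] Q_pos[of x] K_ge_1 p by (simp add: power2_eq_square algebra_simps)
    moreover have "0 \<le> R x * P x" using R_nonneg p by simp
    moreover have "0 \<le> Q x * Q x" by simp
    ultimately have "\<bar>Q x * Q x - R x * P x\<bar> \<le> K^2 * (P x)^2" by linarith
    then show ?thesis using p by (simp add: r'_def abs_div divide_le_eq)
  qed
  ultimately show ?thesis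
    using field_differentiable_bound[of UNIV "\<lambda>x. Q x / P x" r' "K^2" x1 x2] by simp
qed

lemma A_lipschitz:
  assumes "1 / m \<le> s1" "1 / m \<le> s2" "s1 \<le> b" "s2 \<le> b"
  shows "\<bar>A s1 - A s2\<bar> \<le> (2 * b * K + b^2 * K^2 * m) * \<bar>s1 - s2\<bar>"
proof -
  have s0: "0 < s1" "0 < s2" using assms pos_if_inverse_m_le by auto
  define r1 where "r1 = Q (X s1) / P (X s1)"
  define r2 where "r2 = Q (X s2) / P (X s2)"
  have r1: "0 \<le> r1" "r1 \<le> K"
    unfolding r1_def using Q_le_K_P P_pos Q_pos by (auto simp: divide_le_eq less_imp_le)
  have "\<bar>r1 - r2\<bar> \<le> K^2 * \<bar>X s1 - X s2\<bar>" unfolding r1_def r2_def by (rule Q_div_P_lipschitz)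
  also have "\<dots> \<le> K^2 * (m * \<bar>s1 - s2\<bar>)" using X_lipschitz[OF assms(1,2)] by (simp add: mult_left_mono)
  finally have rr: "\<bar>r1 - r2\<bar> \<le> K^2 * m * \<bar>s1 - s2\<bar>" by simp
  have "A s1 = s1^2 * r1" "A s2 = s2^2 * r2" unfolding r1_def r2_def by (simp_all add: A_eq s0)
  then have "A s1 - A s2 = (s1 + s2) * (s1 - s2) * r1 + s2^2 * (r1 - r2)"
    by (simp add: algebra_simps power2_eq_square)
  then have "\<bar>A s1 - A s2\<bar> \<le> (s1 + s2) * \<bar>s1 - s2\<bar> * r1 + s2^2 * \<bar>r1 - r2\<bar>"
    using s0 r1 by (simp add: abs_mult abs_triangle_ineq[THEN order_trans])
  also have "(s1 + s2) * \<bar>s1 - s2\<bar> * r1 \<le> (2 * b) * \<bar>s1 - s2\<bar> * K"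
    using assms s0 r1 by (intro mult_mono) auto
  also have "s2^2 * \<bar>r1 - r2\<bar> \<le> b^2 * (K^2 * m * \<bar>s1 - s2\<bar>)"
    using assms s0 rr by (intro mult_mono power_mono) auto
  finally show ?thesis by (simp add: algebra_simps)
qed

end

section \<open>The solution\<close>

locale critical_horizon = critical_core +
  fixes T :: real
  assumes T_pos: "0 < T"
begin

text \<open>\<open>W\<close> bounds the solution \<open>w\<close> on \<open>[0, T]\<close>, hence \<open>smax\<close> bounds \<open>t + w t\<close>; on \<open>[1/m, smax]\<close>
  the function \<open>A\<close> is bounded by \<open>Amax\<close> and \<open>Lip\<close>-Lipschitz. Once \<open>w\<close> has come down to
  size \<open>\<lambda>\<close>, it stays below \<open>\<lambda> M\<close>; \<open>lam0\<close> is the threshold below which \<open>\<lambda>\<close> counts as small.\<close>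
definition "B = max (1 / m) T + 1"
definition "W = B * exp (5 * K * T)"
definition "smax = T + W"
definition "Amax = K * smax^2 + 1 / m"
definition "Lip = 2 * smax * K + smax^2 * K^2 * m + 1"
definition "M = 3 * Amax + 1"
definition "lam0 = 1 / (2 * Lip * M)"
definition "d1 = Amax + 2 * M"
definition "d2 = max (2 * Amax + 3 * Lip * M) ((W + Amax) / lam0^2)"

lemma B_ge: "1 \<le> B" "T < B" "1 / m < B"
  using T_pos m_pos by (auto simp: B_def)

lemma W_ge_B: "B \<le> W"
proof -
  have "1 \<le> exp (5 * K * T)" using K_ge_1 T_pos by simp
  then show ?thesis using B_ge unfolding W_def by (simp add: mult_le_cancel_left1)
qed

lemma Amax_ge: "1 / m \<le> Amax" "1 \<le> m * Amax" "0 < Amax"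
proof -
  have "0 \<le> K * smax^2" using K_ge_1 by simp
  moreover have "m * Amax = m * (K * smax^2) + 1" using m_pos by (simp add: Amax_def algebra_simps)
  ultimately show "1 / m \<le> Amax" "1 \<le> m * Amax" "0 < Amax"
    using m_pos by (auto simp: Amax_def intro: add_nonneg_pos)
qed

lemma Lip_ge_1: "1 \<le> Lip"
  using T_pos B_ge W_ge_B K_ge_1 m_pos by (simp add: Lip_def smax_def)

lemma M_ge: "1 \<le> M" "Amax < M"
  using Amax_ge by (auto simp: M_def)

lemma A_le_Amax: "1 / m \<le> s \<Longrightarrow> s \<le> smax \<Longrightarrow> A s \<le> Amax"
proof -
  assume s: "1 / m \<le> s" "s \<le> smax"
  then have s0: "0 < s" using pos_if_inverse_m_le by blast
  have "A s \<le> K * s^2" using A_le[OF s0] .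
  also have "\<dots> \<le> K * smax^2" using s s0 K_ge_1 by (intro mult_left_mono power_mono) auto
  moreover have "0 < 1 / m" using m_pos by simp
  ultimately show ?thesis unfolding Amax_def by linarith
qed

lemma A_Lip:
  assumes "1 / m \<le> s1" "s1 \<le> smax" "1 / m \<le> s2" "s2 \<le> smax"
  shows "\<bar>A s1 - A s2\<bar> \<le> Lip * \<bar>s1 - s2\<bar>"
proof -
  have "\<bar>A s1 - A s2\<bar> \<le> (2 * smax * K + smax^2 * K^2 * m) * \<bar>s1 - s2\<bar>"
    using A_lipschitz assms by blast
  also have "\<dots> \<le> Lip * \<bar>s1 - s2\<bar>" by (intro mult_right_mono) (auto simp: Lip_def)
  finally show ?thesis .
qed

lemma continuous_on_A: "continuous_on {1 / m..smax} A"
  by (rule lipschitz_on_continuous_on[of Lip])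
    (use A_Lip Lip_ge_1 in \<open>auto intro!: lipschitz_onI simp: dist_real_def\<close>)

end

locale critical_ode = critical_horizon +
  fixes lam :: real and w :: "real \<Rightarrow> real"
  assumes lam: "0 < lam" "lam \<le> 1"
    and w_0: "w 0 = 1 / m"
    and solution: "\<forall>t\<in>{0..T}. 0 < w t \<and>
       (w has_real_derivative (lam / (w t * E0 v (t + w t)) - 1)) (at t within {0..T})"
begin

text \<open>\<open>q t\<close> is the value at which \<open>w' = q/w - 1\<close> would vanish.\<close>
definition "q t = lam * A (t + w t)"

lemma q_pos: "0 < q t"
  using lam A_pos by (simp add: q_def)

lemma w_pos: "u \<in> {0..T} \<Longrightarrow> 0 < w u"
  using solution by blast

lemma w_has_derivative:
  assumes u: "u \<in> {0..T}"
  shows "(w has_real_derivative q u / w u - 1) (at u within {0..T})"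
proof -
  have "lam / (w u * E0 v (u + w u)) = q u / w u"
    using E0_pos[of "u + w u"] w_pos[OF u] by (simp add: A_def q_def)
  then show ?thesis using solution u by metis
qed

lemma w_continuous: "continuous_on {0..T} w"
  using w_has_derivative by (rule DERIV_continuous_on)

text \<open>While \<open>w \<ge> B \<ge> T\<close>, \<open>\<lambda> A (t + w) \<le> K (2 w)\<^sup>2\<close> gives \<open>w' \<le> 4 K w - 1 < 5 K w\<close>.\<close>
lemma w_le_W:
  assumes "u \<in> {0..T}" shows "w u \<le> W"
proof -
  define f where "f u = w u - B * exp (5 * K * u)" for u
  have "\<forall>u\<in>{0..T}. f u \<le> 0"
  proof (rule nonpos_on_interval_by_comparison)
    show "0 \<le> T" using T_pos by simp
    show "continuous_on {0..T} f" unfolding f_def by (intro continuous_intros w_continuous)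
    show "f 0 \<le> 0" using w_0 B_ge by (simp add: f_def)
  next
    fix u assume u: "0 \<le> u" "u < T" "f u = 0"
    then have uT: "u \<in> {0..T}" by simp
    have wu: "w u = B * exp (5 * K * u)" using u by (simp add: f_def)
    then have "B \<le> w u" using K_ge_1 u B_ge by (simp add: mult_le_cancel_left1)
    then have "u + w u \<le> 2 * w u" using u B_ge by simp
    have "q u \<le> A (u + w u)"
      using lam A_pos[of "u + w u"] by (simp add: q_def mult_left_le_one_le)
    also have "\<dots> \<le> K * (u + w u)^2" using A_le u w_pos[OF uT] by simp
    also have "\<dots> \<le> K * (2 * w u)^2"
      using \<open>u + w u \<le> 2 * w u\<close> u w_pos[OF uT] K_ge_1 by (intro mult_left_mono power_mono) auto
    finally have "q u / w u \<le> 4 * K * w u"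
      using w_pos[OF uT] by (simp add: divide_le_eq power2_eq_square)
    moreover have "0 < K * w u" using K_ge_1 w_pos[OF uT] by simp
    moreover have "B * (exp (5 * K * u) * (5 * K)) = 5 * (K * w u)" using wu by simp
    ultimately have neg: "q u / w u - 1 - B * (exp (5 * K * u) * (5 * K)) < 0"
      by linarith
    have "(f has_real_derivative q u / w u - 1 - B * (exp (5 * K * u) * (5 * K)))
        (at u within {0..T})"
      unfolding f_def by (auto intro!: derivative_eq_intros w_has_derivative[OF uT])
    then show "\<exists>g g'. g u = 0 \<and> (g has_real_derivative g') (at u within {0..T}) \<and> g' < 0
        \<and> (\<forall>y\<in>{u..T}. f y \<le> g y)"
      using neg u by blast
  qed
  moreover have "B * exp (5 * K * u) \<le> W"
    using assms K_ge_1 B_ge T_pos unfolding W_def by (auto intro!: mult_left_mono)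
  ultimately show ?thesis using assms by (force simp: f_def)
qed

lemma shifted_time_ge:
  assumes "u \<in> {0..T}" shows "1 / m \<le> u + w u"
proof -
  define f where "f u = 1 / m - (u + w u)" for u
  have "\<forall>u\<in>{0..T}. f u \<le> 0"
  proof (rule nonpos_on_interval_by_comparison)
    show "0 \<le> T" using T_pos by simp
    show "continuous_on {0..T} f" unfolding f_def by (intro continuous_intros w_continuous)
    show "f 0 \<le> 0" using w_0 by (simp add: f_def)
  next
    fix u assume u: "0 \<le> u" "u < T" "f u = 0"
    then have uT: "u \<in> {0..T}" by simp
    have "(f has_real_derivative - (q u / w u)) (at u within {0..T})"
      unfolding f_def by (auto intro!: derivative_eq_intros w_has_derivative[OF uT])
    moreover have "0 < q u / w u" using q_pos w_pos[OF uT] by simp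
    ultimately show "\<exists>g g'. g u = 0 \<and> (g has_real_derivative g') (at u within {0..T}) \<and> g' < 0
        \<and> (\<forall>y\<in>{u..T}. f y \<le> g y)"
      using u by (intro exI[of _ f]) auto
  qed
  then show ?thesis using assms by (force simp: f_def)
qed

lemma shifted_time_le: "u \<in> {0..T} \<Longrightarrow> u + w u \<le> smax"
  using w_le_W by (fastforce simp: smax_def)

lemma shifted_time_mono:
  assumes "0 \<le> x" "x \<le> y" "y \<le> T" shows "x + w x \<le> y + w y"
proof -
  have "- (y + w y) \<le> - (x + w x)"
  proof (rule DERIV_within_nonpos_imp_decreasing[where a = 0 and b = T and f = "\<lambda>u. - (u + w u)"
        and f' = "\<lambda>u. - (q u / w u)"])
    fix u assume "u \<in> {0..T}"
    then show "((\<lambda>u. - (u + w u)) has_real_derivative - (q u / w u)) (at u within {0..T})"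
      by (auto intro!: derivative_eq_intros w_has_derivative)
  next
    fix u assume "0 < u" "u < T"
    then show "- (q u / w u) \<le> 0" using q_pos w_pos by (simp add: less_imp_le)
  qed (use assms in auto)
  then show ?thesis by simp
qed

lemma q_le: "u \<in> {0..T} \<Longrightarrow> q u \<le> lam * Amax"
  using A_le_Amax[OF shifted_time_ge shifted_time_le] lam by (simp add: q_def)

lemma q_lipschitz:
  assumes "0 \<le> x" "x \<le> y" "y \<le> T"
  shows "\<bar>q x - q y\<bar> \<le> lam * Lip * ((y + w y) - (x + w x))"
proof -
  have xy: "x \<in> {0..T}" "y \<in> {0..T}" using assms by auto
  have "\<bar>q x - q y\<bar> = lam * \<bar>A (x + w x) - A (y + w y)\<bar>"
    using lam by (simp add: q_def right_diff_distrib[symmetric] abs_mult)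
  also have "\<dots> \<le> lam * (Lip * \<bar>(x + w x) - (y + w y)\<bar>)"
    using A_Lip shifted_time_ge shifted_time_le xy lam by (simp add: mult_left_mono)
  also have "\<bar>(x + w x) - (y + w y)\<bar> = (y + w y) - (x + w x)"
    using shifted_time_mono[OF assms] by simp
  finally show ?thesis by (simp add: mult.assoc)
qed

lemma estimate_large_lam:
  assumes large: "lam0 \<le> lam" and t: "1 / m \<le> t" "t \<le> T"
  shows "\<bar>w t - lam / E0 v t\<bar> \<le> d2 * lam^2"
proof -
  have t0T: "t \<in> {0..T}" using t pos_if_inverse_m_le[of t] by simp
  have lam0_pos: "0 < lam0" using Lip_ge_1 M_ge by (simp add: lam0_def)
  have "lam / E0 v t = lam * A t" by (simp add: A_def)
  moreover have "A t \<le> Amax" using A_le_Amax t T_pos W_ge_B B_ge by (simp add: smax_def)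
  then have "0 \<le> lam * A t" "lam * A t \<le> Amax" using lam A_pos[of t]
    by (auto intro: order_trans[OF mult_left_le_one_le])
  moreover have "0 < w t" "w t \<le> W" using w_pos w_le_W t0T by auto
  ultimately have "\<bar>w t - lam / E0 v t\<bar> \<le> W + Amax" by auto
  also have "\<dots> = (W + Amax) / lam0^2 * lam0^2" using lam0_pos by simp
  also have "\<dots> \<le> (W + Amax) / lam0^2 * lam^2"
    using lam0_pos large Amax_ge W_ge_B B_ge by (intro mult_left_mono power_mono) auto
  also have "\<dots> \<le> d2 * lam^2" unfolding d2_def by (intro mult_right_mono) auto
  finally show ?thesis .
qed

lemma w_reaches_twice_level:
  assumes t0: "0 \<le> t0" "t0 \<le> T" "1 / m + Amax * lam * ln (1 / lam) \<le> t0"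
  shows "\<exists>\<tau>\<in>{0..t0}. w \<tau> \<le> 2 * (lam * Amax)"
proof (rule ccontr)
  define c where "c = lam * Amax"
  have c: "0 < c" using lam Amax_ge by (simp add: c_def)
  assume "\<not> ?thesis"
  then have above: "\<And>y. y \<in> {0..t0} \<Longrightarrow> 2 * c < w y" by (force simp: c_def)
  have sub: "{0..t0} \<subseteq> {0..T}" using t0 by auto
  have "t0 - 0 < w 0 + c * ln (w 0 / c)"
  proof (rule time_above_twice_level_bound[OF c t0(1) _ _ above])
    fix y assume y: "y \<in> {0..t0}"
    then show "(w has_real_derivative q y / w y - 1) (at y within {0..t0})"
      using w_has_derivative[of y] sub by (auto intro: DERIV_subset)
    show "q y / w y - 1 \<le> c / w y - 1"
      using q_le[of y] y sub w_pos[of y] by (auto simp: c_def intro!: divide_right_mono)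
  qed
  also have "c * ln (w 0 / c) = c * (ln (1 / lam) - ln (m * Amax))"
    using m_pos lam Amax_ge by (simp add: w_0 c_def ln_div ln_mult)
  also have "\<dots> \<le> c * ln (1 / lam)" using c Amax_ge by (simp add: mult_left_mono)
  finally show False using t0 w_0 by (simp add: c_def algebra_simps)
qed

lemma small_lam:
  assumes "lam < lam0" shows "2 * lam * Lip * M < 1" and "lam < 1"
proof -
  show LM: "2 * lam * Lip * M < 1"
    using assms Lip_ge_1 M_ge by (simp add: lam0_def field_simps)
  have "1 \<le> Lip * M" using mult_mono[OF Lip_ge_1 M_ge(1)] Lip_ge_1 by simp
  then have "lam \<le> lam * (Lip * M)" using lam by (simp add: mult_le_cancel_left1)
  moreover have "2 * (lam * (Lip * M)) < 1" using LM by (simp add: mult.assoc)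
  ultimately show "lam < 1" by linarith
qed

lemma tracking_after:
  assumes "lam < lam0" and \<tau>: "0 \<le> \<tau>" "w \<tau> \<le> 2 * (lam * Amax)"
  shows "quasi_equilibrium_tracking w q \<tau> T (lam * Amax) (lam * Lip) (lam * M)"
proof
  show "\<And>u. u \<in> {\<tau>..T} \<Longrightarrow> 0 < w u" using w_pos \<tau> by auto
  show "(w has_real_derivative q u / w u - 1) (at u within {\<tau>..T})" if "u \<in> {\<tau>..T}" for u
    using w_has_derivative[of u] \<tau> that by (auto intro: DERIV_subset[where t = "{\<tau>..T}"])
  show "continuous_on {\<tau>..T} q"
    unfolding q_def using shifted_time_ge shifted_time_le \<tau>
    by (intro continuous_intros continuous_on_compose2[OF continuous_on_A]
        continuous_on_subset[OF w_continuous]) auto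
  show "\<And>u. u \<in> {\<tau>..T} \<Longrightarrow> 0 \<le> q u \<and> q u \<le> lam * Amax"
    using q_pos q_le \<tau> by (auto simp: less_imp_le)
  show "\<And>u y. \<tau> \<le> u \<Longrightarrow> u \<le> y \<Longrightarrow> y \<le> T \<Longrightarrow>
      \<bar>q u - q y\<bar> \<le> lam * Lip * ((y + w y) - (u + w u))"
    using q_lipschitz \<tau> by simp
  show "0 < lam * Amax" "0 < lam * Lip" "0 < lam * M" using lam Amax_ge Lip_ge_1 M_ge by auto
  have "lam * (2 * lam * Lip * M) \<le> lam * 1" using small_lam[OF assms(1)] lam by (intro mult_left_mono) auto
  then show "3 * (lam * Amax) + 2 * (lam * Lip) * (lam * M) \<le> lam * M"
    by (simp add: M_def algebra_simps)
  show "w \<tau> \<le> 2 * (lam * Amax)" by (rule \<tau>(2))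
qed

lemma q_near_target:
  assumes t: "1 / m \<le> t" "t \<le> T"
  shows "\<bar>q t - lam / E0 v t\<bar> \<le> lam * Lip * w t"
proof -
  have t_0T: "t \<in> {0..T}" using t pos_if_inverse_m_le[of t] by simp
  have "lam / E0 v t = lam * A t" by (simp add: A_def)
  then have "\<bar>q t - lam / E0 v t\<bar> = lam * \<bar>A (t + w t) - A t\<bar>"
    using lam by (simp add: q_def right_diff_distrib[symmetric] abs_mult)
  also have "\<bar>A (t + w t) - A t\<bar> \<le> Lip * \<bar>(t + w t) - t\<bar>"
    using t W_ge_B B_ge
    by (intro A_Lip shifted_time_ge[OF t_0T] shifted_time_le[OF t_0T]) (auto simp: smax_def)
  also have "\<bar>(t + w t) - t\<bar> = w t" using w_pos[OF t_0T] by simp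
  finally show ?thesis using lam by (simp add: mult.assoc)
qed

text \<open>Spend time \<open>Amax \<lambda> ln(1/\<lambda>)\<close> bringing \<open>w\<close> down to \<open>2 \<lambda> Amax\<close> and a further
  \<open>2 \<lambda> M ln(1/\<lambda>)\<close> letting the tracking error decay to \<open>O(\<lambda>\<^sup>2)\<close>.\<close>
lemma estimate_small_lam:
  assumes small: "lam < lam0" and t: "1 / m + d1 * lam * ln (1 / lam) \<le> t" "t \<le> T"
  shows "\<bar>w t - lam / E0 v t\<bar> \<le> d2 * lam^2"
proof -
  define c where "c = lam * Amax"
  define t0 where "t0 = t - 2 * (lam * M) * ln (1 / lam)"
  have ln_pos: "0 < ln (1 / lam)" using lam small_lam[OF small] by simp
  have t0: "1 / m + Amax * lam * ln (1 / lam) \<le> t0"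
    using t unfolding d1_def t0_def by (simp add: algebra_simps)
  moreover have "0 \<le> Amax * lam * ln (1 / lam)" using Amax_ge lam ln_pos by simp
  ultimately have t0_ge: "1 / m \<le> t0" by linarith
  then have "0 \<le> t0" using pos_if_inverse_m_le by (auto intro: less_imp_le)
  moreover have "t0 \<le> t" using lam M_ge ln_pos by (simp add: t0_def)
  ultimately obtain \<tau> where \<tau>: "0 \<le> \<tau>" "\<tau> \<le> t0" "w \<tau> \<le> 2 * c"
    using w_reaches_twice_level[OF _ _ t0] t unfolding c_def by auto
  interpret tr: quasi_equilibrium_tracking w q \<tau> T c "lam * Lip" "lam * M"
    using tracking_after[OF small] \<tau> by (simp add: c_def)
  have tT: "t \<in> {\<tau>..T}" using \<tau> \<open>t0 \<le> t\<close> t by auto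
  have "- (t - \<tau>) / (2 * (lam * M)) \<le> ln lam"
    using \<tau> lam M_ge by (simp add: t0_def field_simps ln_div)
  then have "exp (- (t - \<tau>) / (2 * (lam * M))) \<le> exp (ln lam)" by (rule exp_mono)
  then have "exp (- (t - \<tau>) / (2 * (lam * M))) \<le> lam" using lam by simp
  then have "tr.decay t \<le> 2 * c * lam"
    unfolding tr.decay_def using lam Amax_ge by (intro mult_left_mono) (auto simp: c_def)
  then have "\<bar>w t - q t\<bar> \<le> 2 * c * lam + 2 * (lam * Lip) * (lam * M)"
    using tr.tracking_bound[OF tT] by linarith
  moreover have "\<bar>q t - lam / E0 v t\<bar> \<le> lam * Lip * w t"
    using q_near_target t0_ge \<open>t0 \<le> t\<close> t by simp
  moreover have "lam * Lip * w t \<le> lam * Lip * (lam * M)"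
    using tr.tracking_le[OF tT] lam Lip_ge_1 by (intro mult_left_mono) auto
  ultimately have "\<bar>w t - lam / E0 v t\<bar> \<le> (2 * Amax + 3 * Lip * M) * lam^2"
    by (simp add: c_def power2_eq_square algebra_simps)
  also have "\<dots> \<le> d2 * lam^2" unfolding d2_def by (intro mult_right_mono) auto
  finally show ?thesis .
qed

lemma estimate:
  assumes "1 / m + d1 * lam * ln (1 / lam) \<le> t" "t \<le> T"
  shows "\<bar>w t - lam / E0 v t\<bar> \<le> d2 * lam^2"
proof (cases "lam < lam0")
  case True
  then show ?thesis using estimate_small_lam assms by blast
next
  case False
  have "0 \<le> d1 * lam * ln (1 / lam)"
    using lam Amax_ge M_ge by (simp add: d1_def)
  then show ?thesis using estimate_large_lam False assms by simp
qed

end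

theorem lemma16:
  fixes v :: "nat \<Rightarrow> real" and T :: real
  assumes "Nstar v" and "v \<noteq> (\<lambda>k. 0)" and "T > 0"
  shows "\<exists>d1 d2 :: real. \<forall>(lam::real) (w::real \<Rightarrow> real).
           0 < lam \<and> lam \<le> 1 \<and>
           w 0 = 1 / m1 v \<and>
           (\<forall>t\<in>{0..T}. 0 < w t \<and>
              (w has_real_derivative (lam / (w t * E0 v (t + w t)) - 1)) (at t within {0..T}))
           \<longrightarrow> (\<forall>t. 1 / m1 v + d1 * lam * ln (1 / lam) \<le> t \<and> t \<le> T
                   \<longrightarrow> \<bar>w t - lam / E0 v t\<bar> \<le> d2 * lam ^ 2)"
proof -
  interpret critical_horizon v T using assms by unfold_locales
  have "\<bar>w t - lam / E0 v t\<bar> \<le> d2 * lam ^ 2"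
    if "critical_ode v T lam w" "1 / m + d1 * lam * ln (1 / lam) \<le> t" "t \<le> T" for lam w t
    using critical_ode.estimate[OF that] .
  then show ?thesis
    by (intro exI[of _ d1] exI[of _ d2]) (auto intro!: critical_ode.intro critical_ode_axioms.intro
        critical_horizon_axioms)
qed

end
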